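(* Let $(G,g)$ be an eight-dimensional semi-Riemannian Lie group with a subgroup $K\cong\mathrm{SU}(2)\times\mathrm{SU}(2)$ generating a left-invariant conformal foliation $\mathcal F$ on $G$. Let $\mathfrak g=\mathfrak k\oplus\mathfrak m$ be the orthogonal decomposition of the Lie algebra of $G$ with $\mathfrak k=\mathfrak{su}(2)\times\mathfrak{su}(2)$, and let $\{A,B,C,R,S,T,X,Y\}$ be an orthonormal basis for $\mathfrak g$ such that $A,B,C$ span the first factor, $R,S,T$ the second, with $[A,B]=2C$, $[C,A]=2B$, $[B,C]=2A$, $[R,S]=2T$, $[T,R]=2S$, $[S,T]=2R$. In this setting the brackets have the form $[A,X]=-b_{11}B-c_{11}C$, $[A,Y]=-b_{21}B-c_{21}C$, $[B,X]=b_{11}A-c_{12}C$, $[B,Y]=b_{21}A-c_{22}C$, $[C,X]=c_{11}A+c_{12}B$, $[C,Y]=c_{21}A+c_{22}B$, $[R,X]=-s_{14}S-t_{14}T$, $[R,Y]=-s_{24}S-t_{24}T$, $[S,X]=s_{14}R-t_{15}T$, $[S,Y]=s_{24}R-t_{25}T$, $[T,X]=t_{14}R+t_{15}S$, $[T,Y]=t_{24}R+t_{25}S$ for real numbers $b_{ij},c_{ij},s_{ij},t_{ij}$. Then the foliation $\mathcal F$ is semi-Riemannian and minimal. It is totally geodesic if and only if $$0=(\varepsilon_B-\varepsilon_A)b_{11}=(\varepsilon_B-\varepsilon_A)b_{21}=(\varepsilon_C-\varepsilon_A)c_{11}=(\varepsilon_C-\varepsilon_A)c_{21}=(\varepsilon_C-\varepsilon_B)c_{12}=(\varepsilon_C-\varepsilon_B)c_{22},$$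 $$0=(\varepsilon_S-\varepsilon_R)s_{14}=(\varepsilon_S-\varepsilon_R)s_{24}=(\varepsilon_T-\varepsilon_R)t_{14}=(\varepsilon_T-\varepsilon_R)t_{24}=(\varepsilon_T-\varepsilon_S)t_{15}=(\varepsilon_T-\varepsilon_S)t_{25}.$$
   Context: A semi-Riemannian Lie group $(G,g)$ is a Lie group with a left-invariant non-degenerate metric $g$ of arbitrary signature; its Lie algebra is identified with the left-invariant vector fields. $K$ generates the left-invariant foliation $\mathcal F$ by left translates of $K$, with tangent distribution $\mathcal V$ spanned by $\mathfrak k$ and orthogonal complement $\mathcal H$ spanned by $\mathfrak m$; $\mathcal V,\mathcal H$ also denote orthogonal projections. Orthonormal means $g(E_i,E_j)=\varepsilon_{E_i}\delta_{ij}$, $\varepsilon_{E_i}=g(E_i,E_i)\in\{\pm1\}$. With $\nabla$ the Levi-Civita connection: $B^{\mathcal H}(E,F)=\tfrac12\mathcal V(\nabla_EF+\nabla_FE)$ ($E,F\in\mathcal H$), $B^{\mathcal V}(E,F)=\tfrac12\mathcal H(\nabla_EF+\nabla_FE)$ ($E,F\in\mathcal V$). $\mathcal F$ is conformal if $B^{\mathcal H}=g\otimes V$ for some vector field $V$ in $\mathcal V$, semi-Riemannian if $B^{\mathcal H}=0$, minimal if $\sum_k\varepsilon_{V_k}B^{\mathcal V}(V_k,V_k)=0$ for an orthonormal basis $\{V_k\}$ of $\mathcal V$, and totally geodesic if $B^{\mathcal V}=0$. *)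

theory Defs
  imports "HOL-Analysis.Analysis"
begin

text \<open>All objects are left-invariant, so everything is expressed on the Lie algebra:
  a real vector space 'v with Lie bracket br and non-degenerate symmetric bilinear form g.\<close>

definition lie_bracket :: "('v::real_vector \<Rightarrow> 'v \<Rightarrow> 'v) \<Rightarrow> bool" where
  "lie_bracket br \<longleftrightarrow> bilinear br \<and> (\<forall>x. br x x = 0) \<and>
     (\<forall>x y z. br x (br y z) + br y (br z x) + br z (br x y) = 0)"

definition semi_riem_metric :: "('v::real_vector \<Rightarrow> 'v \<Rightarrow> real) \<Rightarrow> bool" where
  "semi_riem_metric g \<longleftrightarrow> bilinear g \<and> (\<forall>x y. g x y = g y x) \<and>
     (\<forall>x. (\<forall>y. g x y = 0) \<longrightarrow> x = 0)"

definition orthonormal_basis :: "('v::real_vector \<Rightarrow> 'v \<Rightarrow> real) \<Rightarrow> 'v set \<Rightarrow> 'v list \<Rightarrow> bool" where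
  "orthonormal_basis g W vs \<longleftrightarrow> distinct vs \<and> set vs \<subseteq> W \<and> span (set vs) = W \<and>
     (\<forall>i<length vs. \<forall>j<length vs. i \<noteq> j \<longrightarrow> g (vs!i) (vs!j) = 0) \<and>
     (\<forall>i<length vs. g (vs!i) (vs!i) = 1 \<or> g (vs!i) (vs!i) = -1)"

text \<open>Levi-Civita connection on left-invariant vector fields (Koszul formula).\<close>
definition lc_conn :: "('v::real_vector \<Rightarrow> 'v \<Rightarrow> real) \<Rightarrow> ('v \<Rightarrow> 'v \<Rightarrow> 'v) \<Rightarrow> 'v \<Rightarrow> 'v \<Rightarrow> 'v" where
  "lc_conn g br E F = (THE v. \<forall>Z. g v Z = (g (br E F) Z - g (br F Z) E + g (br Z E) F) / 2)"

definition orth_compl :: "('v::real_vector \<Rightarrow> 'v \<Rightarrow> real) \<Rightarrow> 'v set \<Rightarrow> 'v set" where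
  "orth_compl g W = {Z. \<forall>w\<in>W. g Z w = 0}"

definition orth_proj :: "('v::real_vector \<Rightarrow> 'v \<Rightarrow> real) \<Rightarrow> 'v set \<Rightarrow> 'v \<Rightarrow> 'v" where
  "orth_proj g W Z = (THE v. v \<in> W \<and> (\<forall>w\<in>W. g (Z - v) w = 0))"

text \<open>Second fundamental forms; k is the vertical subspace, m = orth_compl g k the horizontal one.\<close>
definition BH :: "('v::real_vector \<Rightarrow> 'v \<Rightarrow> real) \<Rightarrow> ('v \<Rightarrow> 'v \<Rightarrow> 'v) \<Rightarrow> 'v set \<Rightarrow> 'v \<Rightarrow> 'v \<Rightarrow> 'v" where
  "BH g br k E F = (1/2) *\<^sub>R orth_proj g k (lc_conn g br E F + lc_conn g br F E)"

definition BV :: "('v::real_vector \<Rightarrow> 'v \<Rightarrow> real) \<Rightarrow> ('v \<Rightarrow> 'v \<Rightarrow> 'v) \<Rightarrow> 'v set \<Rightarrow> 'v \<Rightarrow> 'v \<Rightarrow> 'v" where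
  "BV g br k E F = (1/2) *\<^sub>R orth_proj g (orth_compl g k) (lc_conn g br E F + lc_conn g br F E)"

definition conformal_fol :: "('v::real_vector \<Rightarrow> 'v \<Rightarrow> real) \<Rightarrow> ('v \<Rightarrow> 'v \<Rightarrow> 'v) \<Rightarrow> 'v set \<Rightarrow> bool" where
  "conformal_fol g br k \<longleftrightarrow> (\<exists>V\<in>k. \<forall>E\<in>orth_compl g k. \<forall>F\<in>orth_compl g k.
      BH g br k E F = g E F *\<^sub>R V)"

definition semi_riem_fol :: "('v::real_vector \<Rightarrow> 'v \<Rightarrow> real) \<Rightarrow> ('v \<Rightarrow> 'v \<Rightarrow> 'v) \<Rightarrow> 'v set \<Rightarrow> bool" where
  "semi_riem_fol g br k \<longleftrightarrow> (\<forall>E\<in>orth_compl g k. \<forall>F\<in>orth_compl g k. BH g br k E F = 0)"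

definition minimal_fol :: "('v::real_vector \<Rightarrow> 'v \<Rightarrow> real) \<Rightarrow> ('v \<Rightarrow> 'v \<Rightarrow> 'v) \<Rightarrow> 'v set \<Rightarrow> bool" where
  "minimal_fol g br k \<longleftrightarrow> (\<forall>vs. orthonormal_basis g k vs \<longrightarrow>
      (\<Sum>i<length vs. g (vs!i) (vs!i) *\<^sub>R BV g br k (vs!i) (vs!i)) = 0)"

definition totally_geodesic_fol :: "('v::real_vector \<Rightarrow> 'v \<Rightarrow> real) \<Rightarrow> ('v \<Rightarrow> 'v \<Rightarrow> 'v) \<Rightarrow> 'v set \<Rightarrow> bool" where
  "totally_geodesic_fol g br k \<longleftrightarrow> (\<forall>E\<in>k. \<forall>F\<in>k. BV g br k E F = 0)"

end

theory Submission
  imports Defs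
begin

(* By the Koszul formula, g (nabla_E F + nabla_F E) Z = g [Z, E] F + g [Z, F] E, which is
   ad_sym_form g br Z E F below.  Hence B^H (E, F) is detected by this form with Z in k, and
   B^V (E, F) by the same form with Z in m.
   Since [k, m] lies in k and k is orthogonal to m, B^H vanishes; neither conformality nor the
   brackets inside k enter the argument.  The mean curvature in a direction Z of m is the
   g-trace of ad Z on k, which does not depend on the orthonormal basis and vanishes because
   ad X and ad Y have zero diagonal in the basis A, ..., T.  Finally, B^V = 0 iff ad X and ad Y
   are g-skew-adjoint on k; on two basis vectors E, F of the same su(2) factor this reads
   (eps_F - eps_E) times a structure constant, and on all other pairs of basis vectors it
   holds identically. *)

lemma bilinear_linear_left: "bilinear h \<Longrightarrow> linear (\<lambda>x. h x z)"
  by (simp add: bilinear_def)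

lemma bilinear_linear_right: "bilinear h \<Longrightarrow> linear (\<lambda>x. h z x)"
  by (simp add: bilinear_def)

lemma bilinear_sum_left: "bilinear h \<Longrightarrow> h (sum f I) z = (\<Sum>i\<in>I. h (f i) z)"
  by (rule real_vector.linear_sum[OF bilinear_linear_left])

lemma bilinear_sum_right: "bilinear h \<Longrightarrow> h z (sum f I) = (\<Sum>i\<in>I. h z (f i))"
  by (rule real_vector.linear_sum[OF bilinear_linear_right])

lemma subspace_orth_compl: "bilinear g \<Longrightarrow> subspace (orth_compl g W)"
  by (simp add: subspace_def orth_compl_def bilinear_ladd bilinear_lmul bilinear_lzero)

lemma bilinear_in_subspace:
  assumes h: "bilinear h" and U: "subspace U"
    and base: "\<And>s t. s \<in> S \<Longrightarrow> t \<in> T \<Longrightarrow> h s t \<in> U"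
    and x: "x \<in> span S" and y: "y \<in> span T"
  shows "h x y \<in> U"
proof -
  have "span T \<subseteq> h s -` U" if "s \<in> S" for s
    using base that
    by (intro real_vector.span_minimal
        real_vector.linear_subspace_vimage[OF bilinear_linear_right[OF h] U]) auto
  then have "span S \<subseteq> (\<lambda>x. h x y) -` U"
    using y
    by (intro real_vector.span_minimal
        real_vector.linear_subspace_vimage[OF bilinear_linear_left[OF h] U]) auto
  then show ?thesis using x by auto
qed

lemma orthonormal_basis_iff:
  "orthonormal_basis g W vs \<longleftrightarrow> distinct vs \<and> set vs \<subseteq> W \<and> span (set vs) = W \<and>
     (\<forall>u\<in>set vs. \<forall>v\<in>set vs. u \<noteq> v \<longrightarrow> g u v = 0) \<and> (\<forall>v\<in>set vs. g v v = 1 \<or> g v v = -1)"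
proof (cases "distinct vs")
  case True
  then have "(\<forall>i<length vs. \<forall>j<length vs. i \<noteq> j \<longrightarrow> g (vs!i) (vs!j) = 0) \<longleftrightarrow>
      (\<forall>u\<in>set vs. \<forall>v\<in>set vs. u \<noteq> v \<longrightarrow> g u v = 0)"
    by (auto simp: in_set_conv_nth nth_eq_iff_index_eq) (metis nth_eq_iff_index_eq nth_mem)
  moreover have "(\<forall>i<length vs. g (vs!i) (vs!i) = 1 \<or> g (vs!i) (vs!i) = -1) \<longleftrightarrow>
      (\<forall>v\<in>set vs. g v v = 1 \<or> g v v = -1)"
    by (simp add: all_set_conv_all_nth)
  ultimately show ?thesis using True unfolding orthonormal_basis_def by simp
qed (simp add: orthonormal_basis_def)

context
  fixes g :: "'v::real_vector \<Rightarrow> 'v \<Rightarrow> real" and W :: "'v set" and vs :: "'v list"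
  assumes g: "bilinear g" and onb: "orthonormal_basis g W vs"
begin

lemma orthonormal_basis_sign_sq: "v \<in> set vs \<Longrightarrow> g v v * g v v = 1"
  using onb by (auto simp: orthonormal_basis_iff)

lemma inner_sum_orthonormal_basis:
  assumes "v \<in> set vs"
  shows "g (\<Sum>u\<in>set vs. c u *\<^sub>R u) v = c v * g v v"
proof -
  have "g (\<Sum>u\<in>set vs. c u *\<^sub>R u) v = (\<Sum>u\<in>set vs. c u * g u v)"
    by (simp add: bilinear_sum_left[OF g] bilinear_lmul[OF g])
  also have "\<dots> = (\<Sum>u\<in>set vs. if u = v then c v * g v v else 0)"
    using onb assms by (intro sum.cong) (auto simp: orthonormal_basis_iff)
  finally show ?thesis using assms by simp
qed

lemma orthonormal_basis_expansion:
  assumes "w \<in> W"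
  shows "w = (\<Sum>v\<in>set vs. (g v v * g w v) *\<^sub>R v)"
proof -
  have "w \<in> span (set vs)" using onb assms by (simp add: orthonormal_basis_iff)
  then obtain c where w: "w = (\<Sum>v\<in>set vs. c v *\<^sub>R v)" by (auto simp: span_finite)
  have "c v = g v v * g w v" if v: "v \<in> set vs" for v
  proof -
    have "g w v = c v * g v v" unfolding w using v by (rule inner_sum_orthonormal_basis)
    then have "g v v * g w v = (g v v * g v v) * c v" by simp
    then show ?thesis using v by (simp add: orthonormal_basis_sign_sq)
  qed
  then have "(\<Sum>v\<in>set vs. c v *\<^sub>R v) = (\<Sum>v\<in>set vs. (g v v * g w v) *\<^sub>R v)"
    by (intro sum.cong) simp_all
  with w show ?thesis by (rule trans)
qed

lemma orthonormal_basis_eq_0_iff: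
  assumes "w \<in> W"
  shows "w = 0 \<longleftrightarrow> (\<forall>v\<in>set vs. g w v = 0)"
proof
  assume "\<forall>v\<in>set vs. g w v = 0"
  then have "(\<Sum>v\<in>set vs. (g v v * g w v) *\<^sub>R v) = 0" by simp
  with orthonormal_basis_expansion[OF assms] show "w = 0" by (rule trans)
qed (simp add: bilinear_lzero[OF g])

lemma orthonormal_basis_inner_eq_0:
  assumes "\<And>v. v \<in> set vs \<Longrightarrow> g u v = 0" and "w \<in> W"
  shows "g u w = 0"
proof -
  have "w \<in> span (set vs)" using assms(2) onb by (simp add: orthonormal_basis_iff)
  with bilinear_linear_right[OF g] assms(1) show ?thesis
    by (rule real_vector.linear_eq_0_on_span)
qed

lemma orth_proj_eqI:
  assumes p: "p \<in> W" "\<forall>w\<in>W. g (u - p) w = 0"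
  shows "orth_proj g W u = p"
  unfolding orth_proj_def
proof (rule the_equality)
  show "p \<in> W \<and> (\<forall>w\<in>W. g (u - p) w = 0)" using p by blast
next
  fix q assume q: "q \<in> W \<and> (\<forall>w\<in>W. g (u - q) w = 0)"
  have "p - q \<in> W"
    using p q onb by (auto simp: orthonormal_basis_iff intro: real_vector.span_diff)
  moreover have "g (p - q) v = 0" if "v \<in> set vs" for v
  proof -
    have "v \<in> W" using that onb by (auto simp: orthonormal_basis_iff)
    then show ?thesis
      using p q bilinear_lsub[OF g, of u q v] bilinear_lsub[OF g, of u p v]
        bilinear_lsub[OF g, of p q v] by auto
  qed
  ultimately have "p - q = 0" using orthonormal_basis_eq_0_iff by blast
  then show "q = p" by simp
qed

lemma orth_proj_in: "orth_proj g W u \<in> W"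
  and inner_orth_proj: "w \<in> W \<Longrightarrow> g (orth_proj g W u) w = g u w"
proof -
  define p where "p = (\<Sum>v\<in>set vs. (g v v * g u v) *\<^sub>R v)"
  have "p \<in> span (set vs)"
    unfolding p_def
    by (intro real_vector.span_sum real_vector.span_scale real_vector.span_base)
  then have p_W: "p \<in> W" using onb by (simp add: orthonormal_basis_iff)
  have residual: "\<forall>w\<in>W. g (u - p) w = 0"
  proof
    fix w assume "w \<in> W"
    show "g (u - p) w = 0"
    proof (rule orthonormal_basis_inner_eq_0[OF _ \<open>w \<in> W\<close>])
      fix v assume v: "v \<in> set vs"
      have "g p v = (g v v * g v v) * g u v"
        unfolding p_def using v by (simp add: inner_sum_orthonormal_basis ac_simps)
      then show "g (u - p) v = 0"
        using v by (simp add: bilinear_lsub[OF g] orthonormal_basis_sign_sq)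
    qed
  qed
  have "orth_proj g W u = p" using p_W residual by (rule orth_proj_eqI)
  then show "orth_proj g W u \<in> W" and "w \<in> W \<Longrightarrow> g (orth_proj g W u) w = g u w"
    using p_W residual by (auto simp: bilinear_lsub[OF g])
qed

lemma orth_proj_eq_0_iff: "orth_proj g W u = 0 \<longleftrightarrow> (\<forall>w\<in>W. g u w = 0)"
proof
  assume "orth_proj g W u = 0"
  then show "\<forall>w\<in>W. g u w = 0"
    using inner_orth_proj[of _ u] by (simp add: bilinear_lzero[OF g])
next
  assume "\<forall>w\<in>W. g u w = 0"
  moreover have "0 \<in> W" using onb by (auto simp: orthonormal_basis_iff intro: real_vector.span_zero)
  ultimately show "orth_proj g W u = 0" by (intro orth_proj_eqI) auto
qed

end

lemma orthonormal_basis_append: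
  fixes g :: "'v::real_vector \<Rightarrow> 'v \<Rightarrow> real"
  assumes g: "bilinear g" and onb: "orthonormal_basis g UNIV (us @ ws)"
  shows "orthonormal_basis g (span (set us)) us"
    and "orthonormal_basis g (orth_compl g (span (set us))) ws"
proof -
  have dist: "distinct us" "distinct ws" "set us \<inter> set ws = {}"
    and orth: "\<And>u v. u \<in> set (us @ ws) \<Longrightarrow> v \<in> set (us @ ws) \<Longrightarrow> u \<noteq> v \<Longrightarrow> g u v = 0"
    and sign: "\<And>v. v \<in> set (us @ ws) \<Longrightarrow> g v v = 1 \<or> g v v = -1"
    using onb by (auto simp: orthonormal_basis_iff)
  show onb_us: "orthonormal_basis g (span (set us)) us"
    using dist orth sign by (auto simp: orthonormal_basis_iff intro: real_vector.span_base)
  have ws_perp: "w \<in> orth_compl g (span (set us))" if "w \<in> set ws" for w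
    unfolding orth_compl_def
  proof (intro CollectI ballI)
    fix x assume "x \<in> span (set us)"
    then show "g w x = 0"
      by (rule orthonormal_basis_inner_eq_0[OF g onb_us, rotated]) (use that dist orth in auto)
  qed
  have "orth_compl g (span (set us)) \<subseteq> span (set ws)"
  proof
    fix z assume z: "z \<in> orth_compl g (span (set us))"
    have "z = (\<Sum>v\<in>set (us @ ws). (g v v * g z v) *\<^sub>R v)"
      by (rule orthonormal_basis_expansion[OF g onb]) simp
    also have "\<dots> = (\<Sum>v\<in>set ws. (g v v * g z v) *\<^sub>R v)"
      using z dist(3)
      by (simp add: sum.union_disjoint orth_compl_def real_vector.span_base)
    also have "\<dots> \<in> span (set ws)"
      by (intro real_vector.span_sum real_vector.span_scale real_vector.span_base)
    finally show "z \<in> span (set ws)" .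
  qed
  moreover have "span (set ws) \<subseteq> orth_compl g (span (set us))"
    using ws_perp by (intro real_vector.span_minimal subspace_orth_compl[OF g]) auto
  ultimately show "orthonormal_basis g (orth_compl g (span (set us))) ws"
    using dist orth sign ws_perp by (auto simp: orthonormal_basis_iff)
qed

lemma orthonormal_basis_trace_eq:
  fixes g q :: "'v::real_vector \<Rightarrow> 'v \<Rightarrow> real"
  assumes g: "bilinear g" and g_sym: "\<And>x y. g x y = g y x" and q: "bilinear q"
    and us: "orthonormal_basis g W us" and vs: "orthonormal_basis g W vs"
  shows "(\<Sum>u\<in>set us. g u u * q u u) = (\<Sum>v\<in>set vs. g v v * q v v)"
proof -
  have us_W: "u \<in> W" if "u \<in> set us" for u using us that by (auto simp: orthonormal_basis_iff)
  have vs_W: "v \<in> W" if "v \<in> set vs" for v using vs that by (auto simp: orthonormal_basis_iff)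
  have "(\<Sum>u\<in>set us. g u u * q u u) =
      (\<Sum>u\<in>set us. g u u * q u (\<Sum>v\<in>set vs. (g v v * g u v) *\<^sub>R v))"
    using orthonormal_basis_expansion[OF g vs us_W] by (intro sum.cong) auto
  also have "\<dots> = (\<Sum>u\<in>set us. \<Sum>v\<in>set vs. g u u * g v v * g u v * q u v)"
    by (simp add: bilinear_sum_right[OF q] bilinear_rmul[OF q] sum_distrib_left mult.assoc)
  also have "\<dots> = (\<Sum>v\<in>set vs. \<Sum>u\<in>set us. g u u * g v v * g u v * q u v)"
    by (rule sum.swap)
  also have "\<dots> = (\<Sum>v\<in>set vs. g v v * q (\<Sum>u\<in>set us. (g u u * g v u) *\<^sub>R u) v)"
    by (simp add: bilinear_sum_left[OF q] bilinear_lmul[OF q] sum_distrib_left g_sym mult_ac)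
  also have "\<dots> = (\<Sum>v\<in>set vs. g v v * q v v)"
    using orthonormal_basis_expansion[OF g us vs_W] by (intro sum.cong) auto
  finally show ?thesis .
qed

lemma orthonormal_basis_represents:
  fixes g :: "'v::real_vector \<Rightarrow> 'v \<Rightarrow> real"
  assumes g: "bilinear g" and onb: "orthonormal_basis g UNIV vs" and \<phi>: "linear \<phi>"
  shows "\<exists>!r. \<forall>z. g r z = \<phi> z"
proof (rule ex_ex1I)
  let ?r = "\<Sum>v\<in>set vs. (g v v * \<phi> v) *\<^sub>R v"
  have "g ?r v = \<phi> v" if v: "v \<in> set vs" for v
  proof -
    have "g ?r v = (g v v * g v v) * \<phi> v"
      using v by (simp add: inner_sum_orthonormal_basis[OF g onb] ac_simps)
    then show ?thesis using v by (simp add: orthonormal_basis_sign_sq[OF g onb])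
  qed
  moreover have "z \<in> span (set vs)" for z using onb by (simp add: orthonormal_basis_iff)
  ultimately have "g ?r z = \<phi> z" for z
    by (rule real_vector.linear_eq_on_span[OF bilinear_linear_right[OF g] \<phi>])
  then show "\<exists>r. \<forall>z. g r z = \<phi> z" by blast
next
  fix r s assume "\<forall>z. g r z = \<phi> z" "\<forall>z. g s z = \<phi> z"
  then have "\<forall>v\<in>set vs. g (r - s) v = 0" by (simp add: bilinear_lsub[OF g])
  then show "r = s" using orthonormal_basis_eq_0_iff[OF g onb, of "r - s"] by simp
qed

lemma inner_lc_conn:
  fixes g :: "'v::real_vector \<Rightarrow> 'v \<Rightarrow> real"
  assumes g: "bilinear g" and onb: "orthonormal_basis g UNIV vs" and br: "bilinear br"
  shows "g (lc_conn g br E F) Z = (g (br E F) Z - g (br F Z) E + g (br Z E) F) / 2"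
proof -
  have "linear (\<lambda>Z. (g (br E F) Z - g (br F Z) E + g (br Z E) F) / 2)"
    by (rule linearI)
      (simp_all add: bilinear_radd[OF g] bilinear_rmul[OF g] bilinear_ladd[OF g]
        bilinear_lmul[OF g] bilinear_radd[OF br] bilinear_rmul[OF br] bilinear_ladd[OF br]
        bilinear_lmul[OF br] field_simps)
  from theI'[OF orthonormal_basis_represents[OF g onb this]] show ?thesis
    unfolding lc_conn_def by blast
qed

lemma lie_bracket_antisym:
  assumes "lie_bracket br"
  shows "br y x = - br x y"
proof -
  have br: "bilinear br" and alt: "\<And>x. br x x = 0" using assms by (auto simp: lie_bracket_def)
  have "0 = br (x + y) (x + y)" by (rule alt[symmetric])
  also have "\<dots> = br x y + br y x"
    by (simp add: bilinear_ladd[OF br] bilinear_radd[OF br] alt[of x] alt[of y])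
  finally have "br x y + br y x = 0" by (rule sym)
  then show ?thesis by (metis add.commute eq_neg_iff_add_eq_0)
qed

definition ad_sym_form ::
    "('v::real_vector \<Rightarrow> 'v \<Rightarrow> real) \<Rightarrow> ('v \<Rightarrow> 'v \<Rightarrow> 'v) \<Rightarrow> 'v \<Rightarrow> 'v \<Rightarrow> 'v \<Rightarrow> real"
  where "ad_sym_form g br Z E F = g (br Z E) F + g (br Z F) E"

lemma inner_lc_conn_sym:
  fixes g :: "'v::real_vector \<Rightarrow> 'v \<Rightarrow> real"
  assumes g: "bilinear g" and onb: "orthonormal_basis g UNIV vs" and lie: "lie_bracket br"
  shows "g (lc_conn g br E F + lc_conn g br F E) Z = ad_sym_form g br Z E F"
proof -
  have br: "bilinear br" using lie by (simp add: lie_bracket_def)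
  show ?thesis
    by (simp add: ad_sym_form_def bilinear_ladd[OF g] bilinear_lneg[OF g]
        inner_lc_conn[OF g onb br]
        lie_bracket_antisym[OF lie, of E F] lie_bracket_antisym[OF lie, of Z F]
        lie_bracket_antisym[OF lie, of Z E] field_simps)
qed

lemma BH_eq_0_iff:
  fixes g :: "'v::real_vector \<Rightarrow> 'v \<Rightarrow> real"
  assumes g: "bilinear g" and lie: "lie_bracket br"
    and onb: "orthonormal_basis g UNIV us" and onb_k: "orthonormal_basis g k vs"
  shows "BH g br k E F = 0 \<longleftrightarrow> (\<forall>w\<in>k. ad_sym_form g br w E F = 0)"
  by (simp add: BH_def orth_proj_eq_0_iff[OF g onb_k] inner_lc_conn_sym[OF g onb lie])

lemma BV_in_orth_compl:
  fixes g :: "'v::real_vector \<Rightarrow> 'v \<Rightarrow> real"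
  assumes g: "bilinear g" and onb_m: "orthonormal_basis g (orth_compl g k) ws"
  shows "BV g br k E F \<in> orth_compl g k"
  unfolding BV_def
  by (intro real_vector.subspace_scale[OF subspace_orth_compl[OF g]] orth_proj_in[OF g onb_m])

lemma inner_BV:
  fixes g :: "'v::real_vector \<Rightarrow> 'v \<Rightarrow> real"
  assumes g: "bilinear g" and lie: "lie_bracket br"
    and onb: "orthonormal_basis g UNIV us" and onb_m: "orthonormal_basis g (orth_compl g k) ws"
    and Z: "Z \<in> orth_compl g k"
  shows "g (BV g br k E F) Z = ad_sym_form g br Z E F / 2"
  using Z by (simp add: BV_def bilinear_lmul[OF g] inner_orth_proj[OF g onb_m]
      inner_lc_conn_sym[OF g onb lie])

lemma BV_eq_0_iff:
  fixes g :: "'v::real_vector \<Rightarrow> 'v \<Rightarrow> real"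
  assumes g: "bilinear g" and lie: "lie_bracket br"
    and onb: "orthonormal_basis g UNIV us" and onb_m: "orthonormal_basis g (orth_compl g k) ws"
  shows "BV g br k E F = 0 \<longleftrightarrow> (\<forall>Z\<in>orth_compl g k. ad_sym_form g br Z E F = 0)"
  by (simp add: BV_def orth_proj_eq_0_iff[OF g onb_m] inner_lc_conn_sym[OF g onb lie])

lemma semi_riem_fol_if_bracket_closed:
  fixes g :: "'v::real_vector \<Rightarrow> 'v \<Rightarrow> real"
  assumes metric: "semi_riem_metric g" and lie: "lie_bracket br"
    and onb: "orthonormal_basis g UNIV us" and onb_k: "orthonormal_basis g k vs"
    and closed: "\<And>w E. w \<in> k \<Longrightarrow> E \<in> orth_compl g k \<Longrightarrow> br w E \<in> k"
  shows "semi_riem_fol g br k"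
proof -
  have g: "bilinear g" and g_sym: "\<And>x y. g x y = g y x"
    using metric by (auto simp: semi_riem_metric_def)
  have "ad_sym_form g br w E F = 0"
    if "w \<in> k" "E \<in> orth_compl g k" "F \<in> orth_compl g k" for w E F
  proof -
    have "g F (br w E) = 0" "g E (br w F) = 0"
      using closed that unfolding orth_compl_def by blast+
    then show ?thesis by (simp add: ad_sym_form_def g_sym[of F] g_sym[of E])
  qed
  then show ?thesis
    unfolding semi_riem_fol_def by (simp add: BH_eq_0_iff[OF g lie onb onb_k])
qed

lemma totally_geodesic_fol_iff:
  fixes g :: "'v::real_vector \<Rightarrow> 'v \<Rightarrow> real"
  assumes g: "bilinear g" and lie: "lie_bracket br"
    and onb: "orthonormal_basis g UNIV us" and onb_m: "orthonormal_basis g (orth_compl g k) ws"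
  shows "totally_geodesic_fol g br k \<longleftrightarrow>
    (\<forall>Z\<in>orth_compl g k. \<forall>E\<in>k. \<forall>F\<in>k. ad_sym_form g br Z E F = 0)"
  unfolding totally_geodesic_fol_def BV_eq_0_iff[OF g lie onb onb_m] by blast

lemma minimal_fol_iff:
  fixes g :: "'v::real_vector \<Rightarrow> 'v \<Rightarrow> real"
  assumes metric: "semi_riem_metric g" and lie: "lie_bracket br"
    and onb: "orthonormal_basis g UNIV us" and onb_k: "orthonormal_basis g k vs"
    and onb_m: "orthonormal_basis g (orth_compl g k) ws"
  shows "minimal_fol g br k \<longleftrightarrow>
    (\<forall>Z\<in>orth_compl g k. (\<Sum>v\<in>set vs. g v v * g (br Z v) v) = 0)"
proof -
  have g: "bilinear g" and g_sym: "\<And>x y. g x y = g y x"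
    using metric by (auto simp: semi_riem_metric_def)
  have br: "bilinear br" using lie by (simp add: lie_bracket_def)
  have mean_curvature:
    "(\<Sum>i<length vs'. g (vs'!i) (vs'!i) *\<^sub>R BV g br k (vs'!i) (vs'!i)) = 0 \<longleftrightarrow>
      (\<forall>Z\<in>orth_compl g k. (\<Sum>v\<in>set vs. g v v * g (br Z v) v) = 0)"
    if onb': "orthonormal_basis g k vs'" for vs'
  proof -
    let ?H = "\<Sum>v\<in>set vs'. g v v *\<^sub>R BV g br k v v"
    have "(\<Sum>i<length vs'. g (vs'!i) (vs'!i) *\<^sub>R BV g br k (vs'!i) (vs'!i)) = ?H"
      using onb' by (intro sum.reindex_bij_betw bij_betw_nth) (auto simp: orthonormal_basis_iff)
    moreover have "?H \<in> orth_compl g k"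
      by (intro real_vector.subspace_sum[OF subspace_orth_compl[OF g]]
          real_vector.subspace_scale[OF subspace_orth_compl[OF g]] BV_in_orth_compl[OF g onb_m])
    moreover have "g ?H Z = (\<Sum>v\<in>set vs. g v v * g (br Z v) v)" if Z: "Z \<in> orth_compl g k" for Z
    proof -
      have q: "bilinear (\<lambda>E F. g (br Z E) F)"
        unfolding bilinear_def
        by (auto intro!: linearI simp: bilinear_ladd[OF g] bilinear_lmul[OF g]
            bilinear_radd[OF g] bilinear_rmul[OF g] bilinear_radd[OF br] bilinear_rmul[OF br])
      have "g ?H Z = (\<Sum>v\<in>set vs'. g v v * g (br Z v) v)"
        using Z by (simp add: bilinear_sum_left[OF g] bilinear_lmul[OF g]
            inner_BV[OF g lie onb onb_m] ad_sym_form_def)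
      also have "\<dots> = (\<Sum>v\<in>set vs. g v v * g (br Z v) v)"
        by (rule orthonormal_basis_trace_eq[OF g g_sym q onb' onb_k])
      finally show ?thesis .
    qed
    moreover have "set ws \<subseteq> orth_compl g k" using onb_m by (simp add: orthonormal_basis_iff)
    ultimately show ?thesis
      using orthonormal_basis_eq_0_iff[OF g onb_m, of ?H] by (auto simp: bilinear_lzero[OF g])
  qed
  show ?thesis unfolding minimal_fol_def using mean_curvature onb_k by blast
qed

lemma ad_sym_form_vanishes_on_span_iff:
  fixes g :: "'v::real_vector \<Rightarrow> 'v \<Rightarrow> real"
  assumes g: "bilinear g" and br: "bilinear br"
  shows "(\<forall>Z\<in>span M. \<forall>E\<in>span K. \<forall>F\<in>span K. ad_sym_form g br Z E F = 0) \<longleftrightarrow>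
    (\<forall>z\<in>M. \<forall>e\<in>K. \<forall>f\<in>K. ad_sym_form g br z e f = 0)"
proof
  assume "\<forall>Z\<in>span M. \<forall>E\<in>span K. \<forall>F\<in>span K. ad_sym_form g br Z E F = 0"
  then show "\<forall>z\<in>M. \<forall>e\<in>K. \<forall>f\<in>K. ad_sym_form g br z e f = 0"
    by (blast intro: real_vector.span_base)
next
  assume basis: "\<forall>z\<in>M. \<forall>e\<in>K. \<forall>f\<in>K. ad_sym_form g br z e f = 0"
  show "\<forall>Z\<in>span M. \<forall>E\<in>span K. \<forall>F\<in>span K. ad_sym_form g br Z E F = 0"
  proof (intro ballI)
    fix Z E F assume Z: "Z \<in> span M" and E: "E \<in> span K" and F: "F \<in> span K"
    have "ad_sym_form g br z E F = 0" if z: "z \<in> M" for z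
    proof (rule bilinear_eq[where g = "\<lambda>_ _. 0", OF _ _ order_refl order_refl E F])
      show "bilinear (ad_sym_form g br z)"
        unfolding bilinear_def ad_sym_form_def
        by (auto intro!: linearI simp: bilinear_ladd[OF g] bilinear_lmul[OF g]
            bilinear_radd[OF g] bilinear_rmul[OF g] bilinear_radd[OF br] bilinear_rmul[OF br]
            algebra_simps)
      show "bilinear (\<lambda>(_::'v) (_::'v). 0::real)"
        unfolding bilinear_def by (auto intro!: linearI)
    qed (use z basis in auto)
    moreover have "linear (\<lambda>Z. ad_sym_form g br Z E F)"
      unfolding ad_sym_form_def
      by (auto intro!: linearI simp: bilinear_ladd[OF g] bilinear_lmul[OF g]
          bilinear_ladd[OF br] bilinear_lmul[OF br] algebra_simps)
    ultimately show "ad_sym_form g br Z E F = 0"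
      using real_vector.linear_eq_0_on_span Z by blast
  qed
qed

locale su2_su2_foliation =
  fixes g :: "'v::real_vector \<Rightarrow> 'v \<Rightarrow> real" and br :: "'v \<Rightarrow> 'v \<Rightarrow> 'v"
    and A B C R S T X Y :: 'v and k :: "'v set"
    and b11 b21 c11 c21 c12 c22 s14 s24 t14 t24 t15 t25 :: real
  assumes lie: "lie_bracket br"
    and metric: "semi_riem_metric g"
    and onb: "orthonormal_basis g UNIV [A, B, C, R, S, T, X, Y]"
    and k_def: "k = span {A, B, C, R, S, T}"
    and brX1: "br A X = - (b11 *\<^sub>R B) - c11 *\<^sub>R C" "br A Y = - (b21 *\<^sub>R B) - c21 *\<^sub>R C"
              "br B X = b11 *\<^sub>R A - c12 *\<^sub>R C" "br B Y = b21 *\<^sub>R A - c22 *\<^sub>R C"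
              "br C X = c11 *\<^sub>R A + c12 *\<^sub>R B" "br C Y = c21 *\<^sub>R A + c22 *\<^sub>R B"
    and brX2: "br R X = - (s14 *\<^sub>R S) - t14 *\<^sub>R T" "br R Y = - (s24 *\<^sub>R S) - t24 *\<^sub>R T"
              "br S X = s14 *\<^sub>R R - t15 *\<^sub>R T" "br S Y = s24 *\<^sub>R R - t25 *\<^sub>R T"
              "br T X = t14 *\<^sub>R R + t15 *\<^sub>R S" "br T Y = t24 *\<^sub>R R + t25 *\<^sub>R S"
begin

lemma g_bilinear: "bilinear g"
  using metric by (simp add: semi_riem_metric_def)

lemma br_bilinear: "bilinear br"
  using lie by (simp add: lie_bracket_def)

lemmas bilinear_simps =
  bilinear_ladd[OF g_bilinear] bilinear_radd[OF g_bilinear] bilinear_lmul[OF g_bilinear]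
  bilinear_rmul[OF g_bilinear] bilinear_lsub[OF g_bilinear] bilinear_rsub[OF g_bilinear]
  bilinear_lneg[OF g_bilinear] bilinear_rneg[OF g_bilinear]
  bilinear_ladd[OF br_bilinear] bilinear_radd[OF br_bilinear] bilinear_lmul[OF br_bilinear]
  bilinear_rmul[OF br_bilinear] bilinear_lsub[OF br_bilinear] bilinear_rsub[OF br_bilinear]
  bilinear_lneg[OF br_bilinear] bilinear_rneg[OF br_bilinear]

lemma onb_k: "orthonormal_basis g k [A, B, C, R, S, T]"
  and onb_m: "orthonormal_basis g (orth_compl g k) [X, Y]"
  using orthonormal_basis_append[OF g_bilinear, of "[A, B, C, R, S, T]" "[X, Y]"] onb
  by (simp_all add: k_def)

lemma m_eq: "orth_compl g k = span {X, Y}"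
  using onb_m by (simp add: orthonormal_basis_iff)

(* The reversed list gives the simplifier the inequalities in the other orientation. *)
lemma basis_distinct: "distinct [A, B, C, R, S, T, X, Y]" "distinct [Y, X, T, S, R, C, B, A]"
  using onb by (auto simp: orthonormal_basis_iff)

lemma basis_orthogonal:
  "u \<in> {A, B, C, R, S, T, X, Y} \<Longrightarrow> v \<in> {A, B, C, R, S, T, X, Y} \<Longrightarrow> u \<noteq> v \<Longrightarrow> g u v = 0"
  using onb unfolding orthonormal_basis_iff list.set by blast

lemmas basis_simps = basis_orthogonal basis_distinct[simplified]

lemma ad_X: "br X A = b11 *\<^sub>R B + c11 *\<^sub>R C" "br X B = - (b11 *\<^sub>R A) + c12 *\<^sub>R C"
    "br X C = - (c11 *\<^sub>R A) - c12 *\<^sub>R B"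
    "br X R = s14 *\<^sub>R S + t14 *\<^sub>R T" "br X S = - (s14 *\<^sub>R R) + t15 *\<^sub>R T"
    "br X T = - (t14 *\<^sub>R R) - t15 *\<^sub>R S"
  and ad_Y: "br Y A = b21 *\<^sub>R B + c21 *\<^sub>R C" "br Y B = - (b21 *\<^sub>R A) + c22 *\<^sub>R C"
    "br Y C = - (c21 *\<^sub>R A) - c22 *\<^sub>R B"
    "br Y R = s24 *\<^sub>R S + t24 *\<^sub>R T" "br Y S = - (s24 *\<^sub>R R) + t25 *\<^sub>R T"
    "br Y T = - (t24 *\<^sub>R R) - t25 *\<^sub>R S"
  by (simp_all add: lie_bracket_antisym[OF lie, of X] lie_bracket_antisym[OF lie, of Y] brX1 brX2)

lemma bracket_k_m: "w \<in> k \<Longrightarrow> E \<in> orth_compl g k \<Longrightarrow> br w E \<in> k"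
  unfolding m_eq
proof (rule bilinear_in_subspace[OF br_bilinear, of k "{A, B, C, R, S, T}" "{X, Y}"])
  show "subspace k" by (simp add: k_def)
  show "br s t \<in> k" if "s \<in> {A, B, C, R, S, T}" "t \<in> {X, Y}" for s t
    using that
    by (auto simp: k_def brX1 brX2 real_vector.span_base real_vector.span_add real_vector.span_diff
        real_vector.span_scale real_vector.span_neg)
qed (simp_all add: k_def)

lemma ad_m_zero_diagonal:
  assumes "Z \<in> orth_compl g k" and "u \<in> {A, B, C, R, S, T}"
  shows "g (br Z u) u = 0"
proof (rule real_vector.linear_eq_0_on_span[of "\<lambda>Z. g (br Z u) u"])
  show "linear (\<lambda>Z. g (br Z u) u)"
    by (rule linearI) (simp_all add: bilinear_simps)
  show "g (br Z u) u = 0" if "Z \<in> {X, Y}" for Z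
    using that assms(2) by (auto simp: ad_X ad_Y bilinear_simps basis_simps)
qed (use assms(1) m_eq in auto)

lemma ad_sym_form_basis_iff:
  "(\<forall>Z\<in>{X, Y}. \<forall>E\<in>{A, B, C, R, S, T}. \<forall>F\<in>{A, B, C, R, S, T}. ad_sym_form g br Z E F = 0) \<longleftrightarrow>
      ((g B B - g A A) * b11 = 0 \<and> (g B B - g A A) * b21 = 0 \<and>
       (g C C - g A A) * c11 = 0 \<and> (g C C - g A A) * c21 = 0 \<and>
       (g C C - g B B) * c12 = 0 \<and> (g C C - g B B) * c22 = 0 \<and>
       (g S S - g R R) * s14 = 0 \<and> (g S S - g R R) * s24 = 0 \<and>
       (g T T - g R R) * t14 = 0 \<and> (g T T - g R R) * t24 = 0 \<and>
       (g T T - g S S) * t15 = 0 \<and> (g T T - g S S) * t25 = 0)"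
  by (simp add: ad_sym_form_def ad_X ad_Y bilinear_simps basis_simps algebra_simps conj_comms)

lemma semi_riem: "semi_riem_fol g br k"
  by (rule semi_riem_fol_if_bracket_closed[OF metric lie onb onb_k bracket_k_m])

lemma minimal: "minimal_fol g br k"
  unfolding minimal_fol_iff[OF metric lie onb onb_k onb_m]
proof (intro ballI sum.neutral)
  fix Z v assume "Z \<in> orth_compl g k" "v \<in> set [A, B, C, R, S, T]"
  then show "g v v * g (br Z v) v = 0" by (simp add: ad_m_zero_diagonal)
qed

lemma totally_geodesic_iff:
  "totally_geodesic_fol g br k \<longleftrightarrow>
      ((g B B - g A A) * b11 = 0 \<and> (g B B - g A A) * b21 = 0 \<and>
       (g C C - g A A) * c11 = 0 \<and> (g C C - g A A) * c21 = 0 \<and>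
       (g C C - g B B) * c12 = 0 \<and> (g C C - g B B) * c22 = 0 \<and>
       (g S S - g R R) * s14 = 0 \<and> (g S S - g R R) * s24 = 0 \<and>
       (g T T - g R R) * t14 = 0 \<and> (g T T - g R R) * t24 = 0 \<and>
       (g T T - g S S) * t15 = 0 \<and> (g T T - g S S) * t25 = 0)"
  unfolding totally_geodesic_fol_iff[OF g_bilinear lie onb onb_m] m_eq
  unfolding k_def ad_sym_form_vanishes_on_span_iff[OF g_bilinear br_bilinear]
  by (rule ad_sym_form_basis_iff)

end

theorem theorem6p3:
  fixes g :: "'v::real_vector \<Rightarrow> 'v \<Rightarrow> real" and br :: "'v \<Rightarrow> 'v \<Rightarrow> 'v"
    and A B C R S T X Y :: 'v and k :: "'v set"
    and b11 b21 c11 c21 c12 c22 s14 s24 t14 t24 t15 t25 :: real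
  assumes lie: "lie_bracket br"
    and metric: "semi_riem_metric g"
    and onb: "orthonormal_basis g UNIV [A, B, C, R, S, T, X, Y]"
    and k_def: "k = span {A, B, C, R, S, T}"
    and su2_1: "br A B = 2 *\<^sub>R C" "br C A = 2 *\<^sub>R B" "br B C = 2 *\<^sub>R A"
    and su2_2: "br R S = 2 *\<^sub>R T" "br T R = 2 *\<^sub>R S" "br S T = 2 *\<^sub>R R"
    and prod: "br A R = 0" "br A S = 0" "br A T = 0"
              "br B R = 0" "br B S = 0" "br B T = 0"
              "br C R = 0" "br C S = 0" "br C T = 0"
    and brX1: "br A X = - (b11 *\<^sub>R B) - c11 *\<^sub>R C" "br A Y = - (b21 *\<^sub>R B) - c21 *\<^sub>R C"
              "br B X = b11 *\<^sub>R A - c12 *\<^sub>R C" "br B Y = b21 *\<^sub>R A - c22 *\<^sub>R C"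
              "br C X = c11 *\<^sub>R A + c12 *\<^sub>R B" "br C Y = c21 *\<^sub>R A + c22 *\<^sub>R B"
    and brX2: "br R X = - (s14 *\<^sub>R S) - t14 *\<^sub>R T" "br R Y = - (s24 *\<^sub>R S) - t24 *\<^sub>R T"
              "br S X = s14 *\<^sub>R R - t15 *\<^sub>R T" "br S Y = s24 *\<^sub>R R - t25 *\<^sub>R T"
              "br T X = t14 *\<^sub>R R + t15 *\<^sub>R S" "br T Y = t24 *\<^sub>R R + t25 *\<^sub>R S"
    and conf: "conformal_fol g br k"
  shows "semi_riem_fol g br k \<and> minimal_fol g br k \<and>
    (totally_geodesic_fol g br k \<longleftrightarrow>
      ((g B B - g A A) * b11 = 0 \<and> (g B B - g A A) * b21 = 0 \<and>
       (g C C - g A A) * c11 = 0 \<and> (g C C - g A A) * c21 = 0 \<and>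
       (g C C - g B B) * c12 = 0 \<and> (g C C - g B B) * c22 = 0 \<and>
       (g S S - g R R) * s14 = 0 \<and> (g S S - g R R) * s24 = 0 \<and>
       (g T T - g R R) * t14 = 0 \<and> (g T T - g R R) * t24 = 0 \<and>
       (g T T - g S S) * t15 = 0 \<and> (g T T - g S S) * t25 = 0))"
proof -
  interpret su2_su2_foliation g br A B C R S T X Y k
    b11 b21 c11 c21 c12 c22 s14 s24 t14 t24 t15 t25
    using lie metric onb k_def brX1 brX2 by unfold_locales
  show ?thesis by (intro conjI semi_riem minimal totally_geodesic_iff)
qed

end
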